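(* Let $d\ge1$, $R>0$, $m>d/2$ and $\gamma>0$. There exist $0<C<1$ depending only on $m,R,d$ and a set $F'_\gamma\subset\mathcal{W}_m$ of measure larger than $1-4\gamma$ such that if $V\in F'_\gamma$ then, for every $r\ge1$, $$|\Omega({\boldsymbol j})-b|\ge\frac{C^r\gamma}{N({\boldsymbol j})^{m+d+3}}$$ for every non-resonant ${\boldsymbol j}\in\mathcal{Z}^r$ and every $b\in\mathbb{Z}$.
   Context: $\mathcal{W}_m=\{V=\sum_{a\in\mathbb{Z}^d}v_ae^{ia\cdot x}: v'_a:=v_a(1+|a|)^m/R\in[-1/2,1/2]\ \forall a\}$ with the product probability measure (the $v'_a$ i.i.d. uniform on $[-1/2,1/2]$). Frequencies: $\omega_a=|a|^2+v_a$. $\mathcal{Z}=\mathbb{Z}^d\times\{\pm1\}$, $|(a,\delta)|=|a|$, $\overline{(a,\delta)}=(a,-\delta)$. For ${\boldsymbol j}=(j_1,\dots,j_r)\in\mathcal{Z}^r$, $j_i=(a_i,\delta_i)$: $\Omega({\boldsymbol j})=\sum_i\delta_i\omega_{a_i}$ and $N({\boldsymbol j})=\prod_{k=1}^r(1+|j_k|)$. ${\boldsymbol j}\in\mathcal{Z}^r$ is resonant if $r$ is even and ${\boldsymbol j}$ is, up to order, $(i_1,\dots,i_{r/2},\bar i_1,\dots,\bar i_{r/2})$ for some $i_1,\dots,i_{r/2}\in\mathcal{Z}$; otherwise non-resonant. *)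

theory Defs
  imports "HOL-Probability.Probability"
begin

text \<open>Lattice points a in Z^d are modelled as functions 'd \<Rightarrow> int with 'd a finite
  index type, d = CARD('d). The potential V is parametrised by the normalised
  coefficients v' : Z^d \<Rightarrow> real, v'_a \<in> [-1/2,1/2].\<close>

definition lnorm :: "('d::finite \<Rightarrow> int) \<Rightarrow> real" where
  "lnorm a = sqrt (\<Sum>i\<in>UNIV. (real_of_int (a i))\<^sup>2)"

definition Wmeasure :: "(('d::finite \<Rightarrow> int) \<Rightarrow> real) measure" where
  "Wmeasure = PiM UNIV (\<lambda>_. uniform_measure lborel {-1/2..1/2::real})"

definition Wset :: "(('d::finite \<Rightarrow> int) \<Rightarrow> real) set" where
  "Wset = {v'. \<forall>a. v' a \<in> {-1/2..1/2}}"

definition coeff :: "real \<Rightarrow> real \<Rightarrow> (('d::finite \<Rightarrow> int) \<Rightarrow> real) \<Rightarrow> ('d \<Rightarrow> int) \<Rightarrow> real" where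
  "coeff R m v' a = R * v' a / (1 + lnorm a) powr m"

definition freq :: "real \<Rightarrow> real \<Rightarrow> (('d::finite \<Rightarrow> int) \<Rightarrow> real) \<Rightarrow> ('d \<Rightarrow> int) \<Rightarrow> real" where
  "freq R m v' a = (lnorm a)\<^sup>2 + coeff R m v' a"

text \<open>Elements of Z = Z^d \<times> {\<plusminus>1}; the sign +1 is encoded as True, -1 as False.\<close>
type_synonym 'd zindex = "('d \<Rightarrow> int) \<times> bool"

definition sgnb :: "bool \<Rightarrow> real" where
  "sgnb \<delta> = (if \<delta> then 1 else -1)"

definition zbar :: "'d zindex \<Rightarrow> 'd zindex" where
  "zbar j = (fst j, \<not> snd j)"

definition Omega :: "real \<Rightarrow> real \<Rightarrow> (('d::finite \<Rightarrow> int) \<Rightarrow> real) \<Rightarrow> 'd zindex list \<Rightarrow> real" where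
  "Omega R m v' js = (\<Sum>j\<leftarrow>js. sgnb (snd j) * freq R m v' (fst j))"

definition Nfun :: "('d::finite) zindex list \<Rightarrow> real" where
  "Nfun js = (\<Prod>j\<leftarrow>js. 1 + lnorm (fst j))"

definition resonant :: "'d zindex list \<Rightarrow> bool" where
  "resonant js \<longleftrightarrow> even (length js) \<and>
     (\<exists>is. length is = length js div 2 \<and> mset js = mset (is @ map zbar is))"

end

theory Submission
  imports Defs
begin

text \<open>
  If \<open>j\<close> is non-resonant, some \<open>a \<in> \<int>^d\<close> occurs in \<open>j\<close> with different numbers of signs
  \<open>+1\<close> and \<open>-1\<close>, so \<open>\<Omega>(j)\<close> is affine in the single coordinate \<open>v'_a\<close> with slope of modulus at
  least \<open>R / (1+|a|)^m \<ge> R / N(j)^m\<close>. Integrating over \<open>v'_a\<close> first, the set where \<open>\<Omega>(j)\<close> is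
  \<open>\<epsilon>\<close>-close to an integer has measure \<open>O(\<epsilon> N(j)^m)\<close>. For \<open>\<epsilon> = C^r \<gamma> N(j)^-(m+d+3)\<close> this is
  \<open>O(\<gamma> C^r N(j)^-(d+3))\<close>; summed over \<open>j \<in> Z^r\<close> it is \<open>O(\<gamma> (C S)^r)\<close> with
  \<open>S = \<Sum>{(1+|i|)^-(d+3) | i \<in> Z} < \<infinity>\<close>, and for small \<open>C\<close> the sum over \<open>r \<ge> 1\<close> is below \<open>\<gamma>\<close>.
\<close>

definition net_count :: "'d zindex list \<Rightarrow> ('d \<Rightarrow> int) \<Rightarrow> int" where
  "net_count js a = int (count (mset js) (a, True)) - int (count (mset js) (a, False))"

lemma not_resonant_imp_net_count_nonzero:
  assumes "\<not> resonant (js :: 'd zindex list)"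
  obtains a where "net_count js a \<noteq> 0"
proof -
  have "\<exists>a. net_count js a \<noteq> 0"
  proof (rule ccontr)
    assume "\<not> (\<exists>a. net_count js a \<noteq> 0)"
    then have balanced: "count (mset js) (a, True) = count (mset js) (a, False)" for a
      by (auto simp: net_count_def)
    define ps where "ps = filter snd js"
    have count_zbar: "count (image_mset zbar M) x = count M (zbar x)"
      for M :: "'d zindex multiset" and x
    proof -
      have "zbar -` {x} = {zbar x}" by (auto simp: zbar_def)
      then show ?thesis by (auto simp: count_image_mset Int_insert_left not_in_iff)
    qed
    have "image_mset zbar (mset ps) = mset (filter (\<lambda>j. \<not> snd j) js)"
      using balanced by (intro multiset_eqI) (auto simp: count_zbar zbar_def ps_def)
    then have js_eq: "mset js = mset (ps @ map zbar ps)"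
      using multiset_partition[of "mset js" snd] by (simp add: ps_def)
    have "length js = 2 * length ps"
      using arg_cong[OF js_eq, of size] by simp
    with js_eq have "resonant js"
      unfolding resonant_def by (intro conjI exI[of _ ps]) auto
    with assms show False by simp
  qed
  then show thesis using that by blast
qed

lemma lnorm_nonneg: "lnorm a \<ge> 0"
  unfolding lnorm_def by (simp add: sum_nonneg)

lemma Omega_Cons: "Omega R m v (j # js) = sgnb (snd j) * freq R m v (fst j) + Omega R m v js"
  by (simp add: Omega_def)

lemma Omega_fun_upd:
  "Omega R m (v(a := y)) js
     = Omega R m (v(a := 0)) js + net_count js a * (R / (1 + lnorm a) powr m) * y"
proof (induction js)
  case Nil
  then show ?case by (simp add: Omega_def net_count_def)
next
  case (Cons j js)
  then show ?case
    by (cases j; cases "fst j = a"; cases "snd j")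
      (auto simp: Omega_Cons net_count_def freq_def coeff_def sgnb_def algebra_simps)
qed

lemma Omega_cong:
  "(\<And>j. j \<in> set js \<Longrightarrow> v (fst j) = w (fst j)) \<Longrightarrow> Omega R m v js = Omega R m w js"
  by (induction js) (auto simp: Omega_def freq_def coeff_def)

definition near_integers :: "('a \<Rightarrow> real) \<Rightarrow> real \<Rightarrow> 'a set" where
  "near_integers f \<epsilon> = {x. \<exists>b::int. \<bar>f x - b\<bar> < \<epsilon>}"

lemma near_integers_borel [measurable]:
  "f \<in> borel_measurable M \<Longrightarrow> near_integers f \<epsilon> \<inter> space M \<in> sets M"
proof -
  assume [measurable]: "f \<in> borel_measurable M"
  have "near_integers f \<epsilon> \<inter> space M = {x \<in> space M. \<exists>b::int. \<bar>f x - b\<bar> < \<epsilon>}"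
    by (auto simp: near_integers_def)
  also have "\<dots> \<in> sets M" by measurable
  finally show ?thesis .
qed

text \<open>The integers \<open>b\<close> that can be met lie in an interval of length \<open>|s| + 2\<epsilon>\<close>, and each
  contributes an interval of length \<open>2\<epsilon>/|s|\<close>.\<close>
lemma emeasure_near_integers_affine_le:
  fixes c s \<epsilon> :: real
  assumes "s \<noteq> 0" "0 < \<epsilon>" "\<epsilon> \<le> 1"
  shows "emeasure lborel (near_integers (\<lambda>y. c + s * y) \<epsilon> \<inter> {-1/2..1/2})
           \<le> ennreal (2 * \<epsilon> * (\<bar>s\<bar> + 3) / \<bar>s\<bar>)"
proof -
  define lo where "lo = c - \<bar>s\<bar> / 2 - \<epsilon>"
  define hi where "hi = c + \<bar>s\<bar> / 2 + \<epsilon>"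
  define I where "I = (\<lambda>b::int. {(b - c) / s - \<epsilon> / \<bar>s\<bar> <..< (b - c) / s + \<epsilon> / \<bar>s\<bar>})"
  have cover: "near_integers (\<lambda>y. c + s * y) \<epsilon> \<inter> {-1/2..1/2} \<subseteq> (\<Union>b\<in>{\<lceil>lo\<rceil>..\<lfloor>hi\<rfloor>}. I b)"
  proof
    fix y assume "y \<in> near_integers (\<lambda>y. c + s * y) \<epsilon> \<inter> {-1/2..1/2}"
    then obtain b :: int where b: "\<bar>c + s * y - b\<bar> < \<epsilon>" and y: "\<bar>y\<bar> \<le> 1/2"
      by (auto simp: near_integers_def)
    have "\<bar>s * y\<bar> \<le> \<bar>s\<bar> / 2"
      using y mult_left_mono[of "\<bar>y\<bar>" "1/2" "\<bar>s\<bar>"] by (simp add: abs_mult)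
    then have "b \<in> {\<lceil>lo\<rceil>..\<lfloor>hi\<rfloor>}"
      using b unfolding lo_def hi_def by (auto intro: ceiling_le le_floor_iff[THEN iffD2])
    moreover have "\<bar>y - (b - c) / s\<bar> < \<epsilon> / \<bar>s\<bar>"
    proof -
      have "\<bar>y - (b - c) / s\<bar> = \<bar>c + s * y - b\<bar> / \<bar>s\<bar>"
        using assms(1) by (simp add: field_simps flip: abs_divide)
      then show ?thesis using b assms(1) by (simp add: divide_strict_right_mono)
    qed
    ultimately show "y \<in> (\<Union>b\<in>{\<lceil>lo\<rceil>..\<lfloor>hi\<rfloor>}. I b)"
      unfolding I_def by (intro UN_I[of b]) (auto simp: abs_less_iff)
  qed
  have card_le: "real (card {\<lceil>lo\<rceil>..\<lfloor>hi\<rfloor>}) \<le> \<bar>s\<bar> + 3"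
  proof -
    have "real_of_int (\<lfloor>hi\<rfloor> - \<lceil>lo\<rceil> + 1) \<le> \<bar>s\<bar> + 3"
      using of_int_floor_le[of hi] le_of_int_ceiling[of lo] assms(3) unfolding hi_def lo_def
      by linarith
    then show ?thesis by simp
  qed
  have "emeasure lborel (near_integers (\<lambda>y. c + s * y) \<epsilon> \<inter> {-1/2..1/2})
      \<le> emeasure lborel (\<Union>b\<in>{\<lceil>lo\<rceil>..\<lfloor>hi\<rfloor>}. I b)"
    using cover by (intro emeasure_mono) (auto simp: I_def)
  also have "\<dots> \<le> (\<Sum>b\<in>{\<lceil>lo\<rceil>..\<lfloor>hi\<rfloor>}. emeasure lborel (I b))"
    by (intro emeasure_subadditive_finite) (auto simp: I_def)
  also have "\<dots> = ennreal (real (card {\<lceil>lo\<rceil>..\<lfloor>hi\<rfloor>}) * (2 * \<epsilon> / \<bar>s\<bar>))"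
    using assms by (simp add: I_def ennreal_of_nat_eq_real_of_nat ennreal_mult'[symmetric])
  also have "\<dots> \<le> ennreal ((\<bar>s\<bar> + 3) * (2 * \<epsilon> / \<bar>s\<bar>))"
    using card_le assms by (intro ennreal_leI mult_right_mono) auto
  finally show ?thesis by (simp add: field_simps)
qed

abbreviation uniform_half :: "real measure" where
  "uniform_half \<equiv> uniform_measure lborel {-1/2..1/2}"

lemma prob_space_uniform_half: "prob_space uniform_half"
  by (rule prob_space_uniform_measure) auto

lemma Wmeasure_eq_PiM: "Wmeasure = PiM UNIV (\<lambda>_. uniform_half)"
  by (simp add: Wmeasure_def)

lemma near_integers_PiM_eq_prod_emb:
  assumes "\<And>x. f (restrict x J) = f x"
  shows "near_integers f \<epsilon>
    = prod_emb UNIV (\<lambda>_. uniform_half) J (near_integers f \<epsilon> \<inter> space (PiM J (\<lambda>_. uniform_half)))"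
  using assms by (auto simp: prod_emb_def near_integers_def space_PiM)

lemma near_integers_sets_PiM:
  assumes "f \<in> borel_measurable (PiM J (\<lambda>_. uniform_half))" "\<And>x. f (restrict x J) = f x"
  shows "near_integers f \<epsilon> \<in> sets (PiM UNIV (\<lambda>_. uniform_half))"
  using assms by (subst near_integers_PiM_eq_prod_emb) auto

text \<open>Fubini, integrating over the coordinate \<open>a\<close> first.\<close>
lemma emeasure_near_integers_PiM_le:
  fixes f :: "('i \<Rightarrow> real) \<Rightarrow> real"
  assumes "finite J" "a \<in> J"
    and f_meas: "f \<in> borel_measurable (PiM J (\<lambda>_. uniform_half))"
    and f_local: "\<And>x. f (restrict x J) = f x"
    and f_affine: "\<And>x y. f (x(a := y)) = f (x(a := 0)) + s * y"
    and "s \<noteq> 0" "0 < \<epsilon>" "\<epsilon> \<le> 1"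
  shows "emeasure (PiM UNIV (\<lambda>_. uniform_half)) (near_integers f \<epsilon>)
           \<le> ennreal (2 * \<epsilon> * (\<bar>s\<bar> + 3) / \<bar>s\<bar>)"
proof -
  interpret U: prob_space uniform_half by (rule prob_space_uniform_half)
  interpret P: product_prob_space "\<lambda>_::'i. uniform_half" UNIV by unfold_locales
  define J' where "J' = J - {a}"
  have J_eq: "J = insert a J'" "a \<notin> J'" "finite J'"
    using assms(1,2) unfolding J'_def by auto
  define X where "X = near_integers f \<epsilon> \<inter> space (PiM J (\<lambda>_. uniform_half))"
  have X[measurable]: "X \<in> sets (PiM J (\<lambda>_. uniform_half))"
    unfolding X_def using f_meas by measurable
  have emb: "near_integers f \<epsilon> = prod_emb UNIV (\<lambda>_. uniform_half) J X"
    unfolding X_def using f_local by (rule near_integers_PiM_eq_prod_emb)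
  have "emeasure (PiM UNIV (\<lambda>_. uniform_half)) (near_integers f \<epsilon>)
      = emeasure (PiM J (\<lambda>_. uniform_half)) X"
    unfolding emb using X assms(1) by (intro P.emeasure_PiM_emb') auto
  also have "\<dots> = (\<integral>\<^sup>+x. indicator X x \<partial>PiM J (\<lambda>_. uniform_half))"
    using X by simp
  also have "\<dots> = (\<integral>\<^sup>+x. (\<integral>\<^sup>+y. indicator X (x(a := y)) \<partial>uniform_half) \<partial>PiM J' (\<lambda>_. uniform_half))"
    unfolding J_eq(1) using X J_eq by (intro P.product_nn_integral_insert) auto
  also have "\<dots> \<le> (\<integral>\<^sup>+x. ennreal (2 * \<epsilon> * (\<bar>s\<bar> + 3) / \<bar>s\<bar>) \<partial>PiM J' (\<lambda>_. uniform_half))"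
  proof (rule nn_integral_mono)
    fix x assume x: "x \<in> space (PiM J' (\<lambda>_. uniform_half))"
    define G where "G = near_integers (\<lambda>y. f (x(a := 0)) + s * y) \<epsilon>"
    have G[measurable]: "G \<inter> space borel \<in> sets borel"
      unfolding G_def by measurable
    have "x(a := y) \<in> space (PiM J (\<lambda>_. uniform_half))" for y
      using x unfolding J_eq(1) by (auto simp: space_PiM PiE_iff extensional_def)
    then have "indicator X (x(a := y)) = (indicator G y :: ennreal)" for y
      by (simp add: X_def G_def near_integers_def indicator_def f_affine[of x y])
    then have "(\<integral>\<^sup>+y. indicator X (x(a := y)) \<partial>uniform_half) = emeasure uniform_half G"
      using G by simp
    also have "\<dots> = emeasure lborel (G \<inter> {-1/2..1/2})"
      using G by (simp add: Int_commute divide_ennreal_def)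
    also have "\<dots> \<le> ennreal (2 * \<epsilon> * (\<bar>s\<bar> + 3) / \<bar>s\<bar>)"
      unfolding G_def using assms(6-8) by (rule emeasure_near_integers_affine_le)
    finally show "(\<integral>\<^sup>+y. indicator X (x(a := y)) \<partial>uniform_half) \<le> ennreal (2 * \<epsilon> * (\<bar>s\<bar> + 3) / \<bar>s\<bar>)" .
  qed
  also have "\<dots> = ennreal (2 * \<epsilon> * (\<bar>s\<bar> + 3) / \<bar>s\<bar>)"
  proof -
    interpret PJ': prob_space "PiM J' (\<lambda>_. uniform_half)"
      by (rule prob_space_PiM) (rule prob_space_uniform_half)
    show ?thesis using PJ'.emeasure_space_1 by simp
  qed
  finally show ?thesis .
qed

lemma Omega_measurable:
  assumes "fst ` set js \<subseteq> J"
  shows "(\<lambda>v. Omega R m v js) \<in> borel_measurable (PiM J (\<lambda>_. uniform_half))"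
  using assms
proof (induction js)
  case Nil
  then show ?case by (simp add: Omega_def)
next
  case (Cons j js)
  have "(\<lambda>v. v (fst j)) \<in> borel_measurable (PiM J (\<lambda>_. uniform_half))"
    using Cons.prems measurable_component_singleton[of "fst j" J "\<lambda>_. uniform_half"] by simp
  moreover have "(\<lambda>v. Omega R m v js) \<in> borel_measurable (PiM J (\<lambda>_. uniform_half))"
    using Cons by simp
  ultimately show ?case
    unfolding Omega_Cons freq_def coeff_def by measurable
qed

definition small_divisor_set ::
    "real \<Rightarrow> real \<Rightarrow> real \<Rightarrow> real \<Rightarrow> 'd::finite zindex list \<Rightarrow> (('d \<Rightarrow> int) \<Rightarrow> real) set" where
  "small_divisor_set R m C \<gamma> js = near_integers (\<lambda>v. Omega R m v js)
     (C ^ length js * \<gamma> / Nfun js powr (m + real CARD('d) + 3))"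

lemma small_divisor_set_sets: "small_divisor_set R m C \<gamma> js \<in> sets Wmeasure"
  unfolding small_divisor_set_def Wmeasure_eq_PiM
  by (rule near_integers_sets_PiM[OF Omega_measurable[OF order_refl]]) (rule Omega_cong, auto)

lemma Nfun_Cons: "Nfun (j # js) = (1 + lnorm (fst j)) * Nfun js"
  by (simp add: Nfun_def)

lemma one_le_Nfun: "1 \<le> Nfun js"
proof (induction js)
  case (Cons j js)
  then show ?case
    using lnorm_nonneg[of "fst j"] mult_mono[of 1 "1 + lnorm (fst j)" 1 "Nfun js"]
    by (simp add: Nfun_Cons)
qed (simp add: Nfun_def)

lemma le_Nfun: "j \<in> set js \<Longrightarrow> 1 + lnorm (fst j) \<le> Nfun js"
proof (induction js)
  case (Cons k js)
  have "1 + lnorm (fst j) \<le> (1 + lnorm (fst k)) * Nfun js"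
  proof (cases "j = k")
    case True
    then show ?thesis
      using one_le_Nfun[of js] lnorm_nonneg[of "fst k"] mult_left_mono[of 1 "Nfun js"] by simp
  next
    case False
    with Cons have "1 + lnorm (fst j) \<le> Nfun js" by simp
    moreover have "1 * Nfun js \<le> (1 + lnorm (fst k)) * Nfun js"
      using one_le_Nfun[of js] lnorm_nonneg[of "fst k"] by (intro mult_right_mono) auto
    ultimately show ?thesis by simp
  qed
  then show ?case by (simp add: Nfun_Cons)
qed simp

definition zweight :: "'d::finite zindex \<Rightarrow> real" where
  "zweight j = (1 + lnorm (fst j)) powr - (real CARD('d) + 3)"

lemma Nfun_powr_eq_prod_list:
  "Nfun js powr - (real CARD('d) + 3) = prod_list (map zweight (js :: 'd::finite zindex list))"
proof (induction js)
  case (Cons j js)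
  have "0 < 1 + lnorm (fst j)" using lnorm_nonneg[of "fst j"] by simp
  then show ?case
    using Cons one_le_Nfun[of js] by (simp add: Nfun_Cons zweight_def powr_mult)
qed (simp add: Nfun_def)

lemma near_integers_bound_le:
  fixes s P R \<epsilon> :: real
  assumes "0 < \<epsilon>" "0 < R" "1 \<le> P" "R / P \<le> \<bar>s\<bar>"
  shows "2 * \<epsilon> * (\<bar>s\<bar> + 3) / \<bar>s\<bar> \<le> 2 * (1 + 3 / R) * \<epsilon> * P"
proof -
  have s: "0 < \<bar>s\<bar>" using assms by (smt (verit) divide_pos_pos)
  then have "3 / \<bar>s\<bar> \<le> 3 * P / R"
    using assms by (simp add: field_simps mult_left_mono)
  then have "(\<bar>s\<bar> + 3) / \<bar>s\<bar> \<le> P * (1 + 3 / R)"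
    using s assms(3) by (simp add: add_divide_distrib distrib_left mult.commute[of P 3])
  then have "2 * \<epsilon> * ((\<bar>s\<bar> + 3) / \<bar>s\<bar>) \<le> 2 * \<epsilon> * (P * (1 + 3 / R))"
    using assms(1) by (intro mult_left_mono) auto
  then show ?thesis by (simp add: algebra_simps)
qed

lemma emeasure_near_integers_Omega_le:
  fixes js :: "'d::finite zindex list" and R m \<epsilon> :: real
  assumes "net_count js a \<noteq> 0" "0 < R" "0 < \<epsilon>" "\<epsilon> \<le> 1"
  defines "s \<equiv> net_count js a * (R / (1 + lnorm a) powr m)"
  shows "emeasure Wmeasure (near_integers (\<lambda>v. Omega R m v js) \<epsilon>)
    \<le> ennreal (2 * \<epsilon> * (\<bar>s\<bar> + 3) / \<bar>s\<bar>)"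
  unfolding Wmeasure_eq_PiM
proof (rule emeasure_near_integers_PiM_le[where J = "insert a (fst ` set js)" and a = a])
  show "(\<lambda>v. Omega R m v js) \<in> borel_measurable (PiM (insert a (fst ` set js)) (\<lambda>_. uniform_half))"
    by (rule Omega_measurable) auto
  show "Omega R m (restrict v (insert a (fst ` set js))) js = Omega R m v js" for v
    by (rule Omega_cong) auto
  show "Omega R m (v(a := y)) js = Omega R m (v(a := 0)) js + s * y" for v y
    unfolding Omega_fun_upd[of R m v a y] s_def by simp
  show "s \<noteq> 0"
    unfolding s_def using assms(1,2) lnorm_nonneg[of a] by simp
qed (use assms in auto)

lemma emeasure_small_divisor_set_le:
  fixes js :: "'d::finite zindex list"
  assumes "\<not> resonant js" "0 < R" "0 \<le> m" "0 < \<gamma>" "\<gamma> \<le> 1/4" "0 < C" "C \<le> 1"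
  shows "emeasure Wmeasure (small_divisor_set R m C \<gamma> js)
    \<le> ennreal (2 * (1 + 3 / R) * \<gamma> * C ^ length js * prod_list (map zweight js))"
proof -
  obtain a where a: "net_count js a \<noteq> 0"
    using assms(1) by (rule not_resonant_imp_net_count_nonzero)
  then have "(a, True) \<in> set js \<or> (a, False) \<in> set js"
    unfolding net_count_def by (metis count_mset_0_iff diff_self)
  then have a_le_N: "1 + lnorm a \<le> Nfun js"
    using le_Nfun by fastforce
  define N where "N = Nfun js"
  define A where "A = (1 + lnorm a) powr m"
  define s where "s = net_count js a * (R / A)"
  define \<epsilon> where "\<epsilon> = C ^ length js * \<gamma> / N powr (m + real CARD('d) + 3)"
  have N: "1 \<le> N" unfolding N_def by (rule one_le_Nfun)
  have A: "1 \<le> A" "A \<le> N powr m"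
    unfolding A_def N_def using assms(3) a_le_N lnorm_nonneg[of a]
    by (auto intro: ge_one_powr_ge_zero powr_mono2[of m])
  have "1 * (R / A) \<le> \<bar>of_int (net_count js a)\<bar> * (R / A)"
    using a A assms(2) by (intro mult_right_mono) auto
  then have s: "R / A \<le> \<bar>s\<bar>"
    unfolding s_def abs_mult using A assms(2) by simp
  have C_pow: "0 < C ^ length js" "C ^ length js \<le> 1"
    using assms(6,7) by (auto intro: power_le_one)
  have N_powr: "1 \<le> N powr (m + real CARD('d) + 3)"
    using N assms(3) by (intro ge_one_powr_ge_zero) auto
  have \<epsilon>: "0 < \<epsilon>" "\<epsilon> \<le> 1"
    unfolding \<epsilon>_def using C_pow assms(4,5) N_powr mult_le_one[of "C ^ length js" \<gamma>]
    by (auto simp: divide_le_eq intro!: divide_pos_pos)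
  have "emeasure Wmeasure (small_divisor_set R m C \<gamma> js) \<le> ennreal (2 * \<epsilon> * (\<bar>s\<bar> + 3) / \<bar>s\<bar>)"
    using emeasure_near_integers_Omega_le[OF a assms(2) \<epsilon>, of m]
    by (simp add: small_divisor_set_def \<epsilon>_def N_def s_def A_def)
  also have "\<dots> \<le> ennreal (2 * (1 + 3 / R) * (\<epsilon> * A))"
    using near_integers_bound_le[OF \<epsilon>(1) assms(2) A(1) s] by (intro ennreal_leI) simp
  also have "\<dots> \<le> ennreal (2 * (1 + 3 / R) * (\<gamma> * C ^ length js * N powr - (real CARD('d) + 3)))"
  proof -
    have "\<epsilon> * A \<le> C ^ length js * \<gamma> * N powr m / N powr (m + real CARD('d) + 3)"
      unfolding \<epsilon>_def using A C_pow assms(4) by (simp add: divide_right_mono)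
    also have "\<dots> = \<gamma> * C ^ length js / N powr (real CARD('d) + 3)"
      using N by (simp add: powr_add add.assoc)
    also have "\<dots> = \<gamma> * C ^ length js * N powr - (real CARD('d) + 3)"
      by (simp only: powr_minus_divide) simp
    finally show ?thesis
      by (intro ennreal_leI mult_left_mono) (use assms(2) in simp_all)
  qed
  also have "\<dots> = ennreal (2 * (1 + 3 / R) * \<gamma> * C ^ length js * prod_list (map zweight js))"
    using Nfun_powr_eq_prod_list[of js] by (simp add: N_def mult.assoc)
  finally show ?thesis .
qed

lemma nn_integral_count_space_pair_mult:
  fixes f :: "'a::countable \<Rightarrow> ennreal" and g :: "'b::countable \<Rightarrow> ennreal"
  shows "(\<integral>\<^sup>+p. f (fst p) * g (snd p) \<partial>count_space UNIV)
       = (\<integral>\<^sup>+x. f x \<partial>count_space UNIV) * (\<integral>\<^sup>+y. g y \<partial>count_space UNIV)"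
proof -
  have pair: "count_space (UNIV :: ('a \<times> 'b) set) = count_space UNIV \<Otimes>\<^sub>M count_space UNIV"
    using pair_measure_countable[of "UNIV :: 'a set" "UNIV :: 'b set"] by simp
  have meas: "(\<lambda>p. f (fst p) * g (snd p)) \<in> borel_measurable (count_space UNIV \<Otimes>\<^sub>M count_space UNIV)"
    by (simp flip: pair)
  have "(\<integral>\<^sup>+p. f (fst p) * g (snd p) \<partial>count_space UNIV)
      = (\<integral>\<^sup>+x. (\<integral>\<^sup>+y. f x * g y \<partial>count_space UNIV) \<partial>count_space UNIV)"
    using sigma_finite_measure.nn_integral_fst[OF sigma_finite_measure_count_space meas] by (simp add: pair)
  also have "\<dots> = (\<integral>\<^sup>+x. f x \<partial>count_space UNIV) * (\<integral>\<^sup>+y. g y \<partial>count_space UNIV)"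
    by (simp add: nn_integral_cmult nn_integral_multc)
  finally show ?thesis .
qed

lemma nn_integral_prod_list_length:
  fixes f :: "'a::countable \<Rightarrow> real"
  assumes "\<And>x. 0 \<le> f x"
  shows "(\<integral>\<^sup>+xs. ennreal (prod_list (map f xs)) * indicator {xs. length xs = r} xs \<partial>count_space UNIV)
     = (\<integral>\<^sup>+x. ennreal (f x) \<partial>count_space UNIV) ^ r"
proof (induction r)
  case 0
  have "indicator {xs :: 'a list. length xs = 0} = indicator {[]}" by auto
  then show ?case by simp
next
  case (Suc r)
  define F where "F = (\<lambda>xs :: 'a list. ennreal (prod_list (map f xs)) * indicator {xs. length xs = Suc r} xs)"
  have bij: "bij_betw (\<lambda>p. fst p # snd p) UNIV {xs :: 'a list. xs \<noteq> []}"
    unfolding bij_betw_def inj_on_def by (auto simp: image_def neq_Nil_conv)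
  have "(\<integral>\<^sup>+xs. F xs \<partial>count_space UNIV) = (\<integral>\<^sup>+xs. F xs \<partial>count_space {xs. xs \<noteq> []})"
    by (subst nn_integral_count_space_indicator)
      (auto intro!: nn_integral_cong simp: F_def split: split_indicator)
  also have "\<dots> = (\<integral>\<^sup>+p. F (fst p # snd p) \<partial>count_space UNIV)"
    by (rule nn_integral_bij_count_space[OF bij, symmetric])
  also have "\<dots> = (\<integral>\<^sup>+p. ennreal (f (fst p))
        * (ennreal (prod_list (map f (snd p))) * indicator {xs. length xs = r} (snd p)) \<partial>count_space UNIV)"
  proof -
    have "0 \<le> prod_list (map f xs)" for xs
      using assms by (intro prod_list_nonneg) auto
    then show ?thesis
      unfolding F_def using assms
      by (intro nn_integral_cong) (auto simp: ennreal_mult split: split_indicator)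
  qed
  also have "\<dots> = (\<integral>\<^sup>+x. ennreal (f x) \<partial>count_space UNIV) ^ Suc r"
    by (subst nn_integral_count_space_pair_mult) (simp add: Suc)
  finally show ?case by (simp add: F_def)
qed

lemma nn_integral_length_weighted:
  fixes f :: "'a::countable \<Rightarrow> real" and w :: "nat \<Rightarrow> ennreal"
  assumes "\<And>x. 0 \<le> f x"
  shows "(\<integral>\<^sup>+xs. w (length xs) * ennreal (prod_list (map f xs)) \<partial>count_space UNIV)
     = (\<Sum>r. w r * (\<integral>\<^sup>+x. ennreal (f x) \<partial>count_space UNIV) ^ r)"
proof -
  have "w (length xs) * ennreal (prod_list (map f xs))
      = (\<Sum>r. w r * (ennreal (prod_list (map f xs)) * indicator {xs. length xs = r} xs))" for xs
    by (subst suminf_finite[of "{length xs}"]) (auto split: split_indicator)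
  then have "(\<integral>\<^sup>+xs. w (length xs) * ennreal (prod_list (map f xs)) \<partial>count_space UNIV)
      = (\<Sum>r. \<integral>\<^sup>+xs. w r * (ennreal (prod_list (map f xs)) * indicator {xs. length xs = r} xs)
               \<partial>count_space UNIV)"
    by (simp add: nn_integral_suminf)
  also have "\<dots> = (\<Sum>r. w r * (\<integral>\<^sup>+x. ennreal (f x) \<partial>count_space UNIV) ^ r)"
    using assms by (simp add: nn_integral_cmult nn_integral_prod_list_length)
  finally show ?thesis .
qed

lemma int_powr_abs_summable:
  fixes q :: real
  assumes "1 < q"
  shows "Infinite_Set_Sum.abs_summable_on (\<lambda>n::int. (1 + \<bar>real_of_int n\<bar>) powr - q) UNIV"
proof -
  define g where "g = (\<lambda>n::int. (1 + \<bar>real_of_int n\<bar>) powr - q)"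
  have "summable (\<lambda>n. real (Suc n) powr - q)"
    using assms summable_Suc_iff[of "\<lambda>n. real n powr - q"] by (simp add: summable_real_powr_iff)
  then have "Infinite_Set_Sum.abs_summable_on (\<lambda>n. g (int n)) UNIV"
    and "Infinite_Set_Sum.abs_summable_on (\<lambda>n. g (- int n)) UNIV"
    unfolding abs_summable_on_nat_iff' g_def by (simp_all add: add.commute)
  then have "Infinite_Set_Sum.abs_summable_on g (range int)"
    and "Infinite_Set_Sum.abs_summable_on g (range (\<lambda>n. - int n))"
    by (subst abs_summable_on_reindex_iff[symmetric]; force simp: inj_on_def)+
  moreover have "range int \<union> range (\<lambda>n. - int n) = (UNIV :: int set)"
  proof -
    have "z \<in> range int \<or> z \<in> range (\<lambda>n. - int n)" for z :: int
      by (cases "0 \<le> z") (auto intro: image_eqI[of _ _ "nat z"] image_eqI[of _ _ "nat (- z)"])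
    then show ?thesis by auto
  qed
  ultimately show ?thesis
    using abs_summable_on_union unfolding g_def by metis
qed

lemma abs_coordinate_le_lnorm: "\<bar>real_of_int (a i)\<bar> \<le> lnorm a"
proof -
  have "(real_of_int (a i))\<^sup>2 \<le> (\<Sum>k\<in>UNIV. (real_of_int (a k))\<^sup>2)"
    by (rule member_le_sum) auto
  then show ?thesis
    unfolding lnorm_def using real_sqrt_le_mono by fastforce
qed

text \<open>Since \<open>1 + |a| \<ge> 1 + |a\<^sub>i|\<close> for every coordinate, the lattice sum of \<open>zweight\<close> is
  dominated by a product of \<open>d\<close> convergent one-dimensional sums with exponent \<open>(d+3)/d > 1\<close>.\<close>
lemma zweight_le_prod:
  fixes a :: "'d::finite \<Rightarrow> int"
  shows "zweight (a, \<delta>) \<le> (\<Prod>i\<in>UNIV. (1 + \<bar>real_of_int (a i)\<bar>) powr - ((real CARD('d) + 3) / real CARD('d)))"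
proof -
  define q where "q = (real CARD('d) + 3) / real CARD('d)"
  define L where "L = 1 + lnorm a"
  have L: "1 \<le> L" unfolding L_def using lnorm_nonneg[of a] by simp
  have prod_le: "(\<Prod>i\<in>UNIV. 1 + \<bar>real_of_int (a i)\<bar>) \<le> L ^ CARD('d)"
    using prod_mono[of UNIV "\<lambda>i. 1 + \<bar>real_of_int (a i)\<bar>" "\<lambda>_. L"]
    by (simp add: L_def abs_coordinate_le_lnorm)
  have "zweight (a, \<delta>) = (L ^ CARD('d)) powr - q"
    using L by (simp add: zweight_def L_def q_def powr_realpow[symmetric] powr_powr)
  also have "\<dots> \<le> (\<Prod>i\<in>UNIV. 1 + \<bar>real_of_int (a i)\<bar>) powr - q"
    using prod_le by (intro powr_mono2') (auto simp: q_def intro: prod_pos)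
  also have "\<dots> = (\<Prod>i\<in>UNIV. (1 + \<bar>real_of_int (a i)\<bar>) powr - q)"
    by (rule prod_powr_distrib)
  finally show ?thesis unfolding q_def .
qed

lemma nn_integral_zweight_finite:
  "(\<integral>\<^sup>+j. ennreal (zweight (j :: 'd::finite zindex)) \<partial>count_space UNIV) < \<infinity>"
proof -
  define q where "q = (real CARD('d) + 3) / real CARD('d)"
  define h where "h = (\<lambda>a :: 'd \<Rightarrow> int. \<Prod>i\<in>UNIV. (1 + \<bar>real_of_int (a i)\<bar>) powr - q)"
  have "1 < q" unfolding q_def by (simp add: field_simps)
  then have "Infinite_Set_Sum.abs_summable_on h (PiE UNIV (\<lambda>_. UNIV))"
    unfolding h_def by (intro abs_summable_on_prod_PiE int_powr_abs_summable) auto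
  then have "(\<integral>\<^sup>+a. ennreal (h a) \<partial>count_space UNIV) = ennreal (infsetsum h UNIV)"
    by (intro nn_integral_conv_infsetsum) (auto simp: h_def intro: prod_nonneg)
  then have h_finite: "(\<integral>\<^sup>+a. ennreal (h a) \<partial>count_space UNIV) < \<infinity>"
    by simp
  have "(\<integral>\<^sup>+j. ennreal (zweight (j :: 'd zindex)) \<partial>count_space UNIV)
      \<le> (\<integral>\<^sup>+(j :: 'd zindex). ennreal (h (fst j)) * 1 \<partial>count_space UNIV)"
    by (intro nn_integral_mono) (auto intro!: ennreal_leI simp: h_def q_def zweight_le_prod)
  also have "\<dots> = (\<integral>\<^sup>+a. ennreal (h a) \<partial>count_space UNIV) * (\<integral>\<^sup>+(\<delta>::bool). 1 \<partial>count_space UNIV)"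
    by (rule nn_integral_count_space_pair_mult)
  also have "\<dots> < \<infinity>"
    using h_finite by (simp add: nn_integral_count_space_finite ennreal_mult_less_top)
  finally show ?thesis .
qed

lemma emeasure_UN_le_nn_integral_count_space:
  assumes "countable I" "\<And>i. i \<in> I \<Longrightarrow> X i \<in> sets M"
  shows "emeasure M (\<Union>i\<in>I. X i) \<le> (\<integral>\<^sup>+i. emeasure M (X i) \<partial>count_space I)"
proof -
  have "indicator (\<Union>i\<in>I. X i) x \<le> (\<integral>\<^sup>+i. indicator (X i) x \<partial>count_space I)" for x
  proof (cases "x \<in> (\<Union>i\<in>I. X i)")
    case True
    then obtain j where "j \<in> I" "x \<in> X j" by auto
    then have "(1::ennreal) \<le> (\<integral>\<^sup>+i. indicator (X i) x \<partial>count_space I)"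
      using nn_integral_mono[of "count_space I" "indicator {j}" "\<lambda>i. indicator (X i) x"]
      by (auto split: split_indicator)
    then show ?thesis using True by simp
  qed simp
  then have "emeasure M (\<Union>i\<in>I. X i) \<le> (\<integral>\<^sup>+x. (\<integral>\<^sup>+i. indicator (X i) x \<partial>count_space I) \<partial>M)"
    using assms by (simp add: nn_integral_mono sets.countable_UN'' flip: nn_integral_indicator)
  also have "\<dots> = (\<integral>\<^sup>+i. emeasure M (X i) \<partial>count_space I)"
    using assms by (subst nn_integral_count_space_nn_integral) (auto intro!: nn_integral_cong)
  finally show ?thesis .
qed

lemma resonant_Nil: "resonant []"
  by (simp add: resonant_def)

lemma emeasure_small_divisor_union_le:
  fixes S :: real
  assumes "0 < R" "0 \<le> m" "0 < \<gamma>" "\<gamma> \<le> 1/4" "0 < C" "C \<le> 1"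
    and S: "(\<integral>\<^sup>+j. ennreal (zweight (j :: 'd::finite zindex)) \<partial>count_space UNIV) = ennreal S"
    and "0 \<le> S" "C * S < 1"
  shows "emeasure Wmeasure (\<Union>js\<in>{js :: 'd zindex list. \<not> resonant js}. small_divisor_set R m C \<gamma> js)
    \<le> ennreal (2 * (1 + 3 / R) * \<gamma> * (C * S / (1 - C * S)))"
proof -
  define K where "K = 2 * (1 + 3 / R) * \<gamma>"
  \<comment> \<open>\<open>w 0 = 0\<close> since the empty list is resonant; this keeps \<open>r = 0\<close> out of the geometric sum\<close>
  define w where "w = (\<lambda>r::nat. if r = 0 then 0 else K * C ^ r)"
  have w: "0 \<le> w r" for r
    using assms(1,3,5) by (simp add: w_def K_def)
  have "emeasure Wmeasure (\<Union>js\<in>{js :: 'd zindex list. \<not> resonant js}. small_divisor_set R m C \<gamma> js)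
      \<le> (\<integral>\<^sup>+js. emeasure Wmeasure (small_divisor_set R m C \<gamma> js) \<partial>count_space {js :: 'd zindex list. \<not> resonant js})"
    by (rule emeasure_UN_le_nn_integral_count_space) (auto intro: small_divisor_set_sets)
  also have "\<dots> = (\<integral>\<^sup>+js. emeasure Wmeasure (small_divisor_set R m C \<gamma> js)
      * indicator {js :: 'd zindex list. \<not> resonant js} js \<partial>count_space UNIV)"
    by (simp add: nn_integral_count_space_indicator)
  also have "\<dots> \<le> (\<integral>\<^sup>+(js :: 'd zindex list). ennreal (w (length js)) * ennreal (prod_list (map zweight js)) \<partial>count_space UNIV)"
  proof (intro nn_integral_mono)
    fix js :: "'d zindex list"
    show "emeasure Wmeasure (small_divisor_set R m C \<gamma> js) * indicator {js. \<not> resonant js} js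
        \<le> ennreal (w (length js)) * ennreal (prod_list (map zweight js))"
    proof (cases "resonant js")
      case False
      then have "js \<noteq> []" using resonant_Nil by auto
      then show ?thesis
        using emeasure_small_divisor_set_le[OF False assms(1-6)] False w[of "length js"]
        by (simp add: w_def K_def ennreal_mult'[symmetric] zweight_def prod_list_nonneg)
    qed simp
  qed
  also have "\<dots> = (\<Sum>r. ennreal (w r) * ennreal S ^ r)"
    unfolding S[symmetric] by (rule nn_integral_length_weighted) (simp add: zweight_def)
  also have "\<dots> = ennreal (K * (C * S / (1 - C * S)))"
  proof -
    have "(\<lambda>r. K * (C * S) * (C * S) ^ r) sums (K * (C * S) * (1 / (1 - C * S)))"
      using assms(5,8,9) by (intro sums_mult geometric_sums) auto
    then have shifted: "(\<lambda>r. w (Suc r) * S ^ Suc r) sums (K * (C * S / (1 - C * S)))"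
      by (simp add: w_def power_mult_distrib mult_ac)
    have "(\<lambda>r. w r * S ^ r) sums (K * (C * S / (1 - C * S)))"
      using sums_Suc[of "\<lambda>r. w r * S ^ r", OF shifted] by (simp add: w_def)
    then show ?thesis
      using w assms(8) by (simp add: suminf_ennreal2 sums_iff ennreal_power ennreal_mult'[symmetric])
  qed
  finally show ?thesis by (simp add: K_def)
qed

lemma Wset_sets: "Wset \<in> sets Wmeasure"
proof -
  have "Wset = {x \<in> space (PiM UNIV (\<lambda>_. uniform_half)). \<forall>a. x a \<in> {-1/2..1/2}}"
    by (simp add: Wset_def space_PiM)
  also have "\<dots> \<in> sets (PiM UNIV (\<lambda>_. uniform_half))" by measurable
  finally show ?thesis by (simp add: Wmeasure_eq_PiM)
qed

lemma measure_Wset: "measure Wmeasure (Wset :: (('d::finite \<Rightarrow> int) \<Rightarrow> real) set) = 1"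
proof -
  interpret U: prob_space uniform_half by (rule prob_space_uniform_half)
  interpret P: product_prob_space "\<lambda>_::('d::finite \<Rightarrow> int). uniform_half" UNIV by unfold_locales
  have "AE x in PiM UNIV (\<lambda>_. uniform_half). \<forall>a::'d \<Rightarrow> int. x a \<in> {-1/2..1/2::real}"
  proof (subst AE_all_countable, intro allI)
    fix a :: "'d \<Rightarrow> int"
    have "AE y in uniform_half. y \<in> {-1/2..1/2}" by (rule AE_uniform_measureI) auto
    then show "AE x in PiM UNIV (\<lambda>_. uniform_half). x a \<in> {-1/2..1/2::real}"
      by (rule P.AE_component[of a, simplified])
  qed
  then show ?thesis
    using Wset_sets unfolding Wmeasure_eq_PiM by (subst P.prob_eq_1) (auto simp: Wset_def)
qed

lemma prob_space_Wmeasure: "prob_space Wmeasure"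
  unfolding Wmeasure_eq_PiM by (intro prob_space_PiM prob_space_uniform_half)

lemma exists_small_ratio:
  fixes S K :: real
  assumes "0 \<le> S" "0 < K"
  obtains C where "0 < C" "C < 1" "C * S < 1" "K * (C * S / (1 - C * S)) < 1"
proof
  define C where "C = 1 / ((1 + S) * (1 + K))"
  have "(1 + S) * (1 + K) = 1 + K + S * (1 + K)"
    by (simp add: algebra_simps)
  then have "1 < (1 + S) * (1 + K)"
    using assms by (simp add: add_pos_nonneg)
  then show C: "0 < C" "C < 1"
    unfolding C_def by simp_all
  have "C * S * (1 + K) = S * ((1 + K) / ((1 + S) * (1 + K)))"
    by (simp add: C_def)
  also have "\<dots> = S / (1 + S)"
    using assms by simp
  also have "\<dots> < 1"
    using assms by simp
  finally have q: "C * S + K * (C * S) < 1"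
    by (simp add: algebra_simps)
  moreover have "0 \<le> K * (C * S)"
    using assms C by simp
  ultimately show "C * S < 1"
    by linarith
  then show "K * (C * S / (1 - C * S)) < 1"
    using q by (simp add: field_simps)
qed

lemma good_set_exists:
  fixes S :: real
  assumes "0 < R" "0 \<le> m" "0 < \<gamma>" "\<gamma> \<le> 1/4" "0 < C" "C \<le> 1"
    and S: "(\<integral>\<^sup>+j. ennreal (zweight (j :: 'd::finite zindex)) \<partial>count_space UNIV) = ennreal S"
    and "0 \<le> S" "C * S < 1" and small: "2 * (1 + 3 / R) * (C * S / (1 - C * S)) < 1"
  shows "\<exists>F \<subseteq> (Wset :: (('d \<Rightarrow> int) \<Rightarrow> real) set). F \<in> sets Wmeasure \<and> 1 - \<gamma> < measure Wmeasure F
    \<and> (\<forall>v\<in>F. \<forall>js. \<not> resonant js \<longrightarrow> v \<notin> small_divisor_set R m C \<gamma> js)"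
proof -
  interpret W: prob_space "Wmeasure :: (('d \<Rightarrow> int) \<Rightarrow> real) measure"
    by (rule prob_space_Wmeasure)
  define B where "B = (\<Union>js\<in>{js :: 'd zindex list. \<not> resonant js}. small_divisor_set R m C \<gamma> js)"
  have B: "B \<in> sets Wmeasure"
    unfolding B_def by (intro sets.countable_UN') (auto intro: small_divisor_set_sets)
  define bound where "bound = 2 * (1 + 3 / R) * \<gamma> * (C * S / (1 - C * S))"
  have "0 \<le> bound"
    unfolding bound_def using assms by simp
  moreover have "ennreal (measure Wmeasure B) \<le> ennreal bound"
    unfolding B_def bound_def W.emeasure_eq_measure[symmetric]
    using assms by (intro emeasure_small_divisor_union_le) auto
  ultimately have "measure Wmeasure B \<le> bound"
    by simp
  also have "bound < \<gamma>"
    unfolding bound_def using mult_strict_right_mono[OF small assms(3)] by (simp add: mult_ac)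
  finally have measure_B: "measure Wmeasure B < \<gamma>" .
  have "measure Wmeasure (Wset - B) = 1 - measure Wmeasure (Wset \<inter> B)"
    using W.finite_measure_Diff'[OF Wset_sets B] measure_Wset by simp
  moreover have "measure Wmeasure (Wset \<inter> B) \<le> measure Wmeasure B"
    using B by (intro W.finite_measure_mono) auto
  ultimately have "1 - \<gamma> < measure Wmeasure (Wset - B)"
    using measure_B by linarith
  then show ?thesis
    using B Wset_sets by (intro exI[of _ "Wset - B"]) (auto simp: B_def)
qed

theorem lemmaA1:
  fixes R m :: real
  assumes "R > 0" and "m > real CARD('d::finite) / 2"
  shows "\<exists>C::real. 0 < C \<and> C < 1 \<and>
    (\<forall>\<gamma>::real. \<gamma> > 0 \<longrightarrow>
      (\<exists>F \<subseteq> (Wset :: (('d \<Rightarrow> int) \<Rightarrow> real) set).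
         F \<in> sets (Wmeasure :: (('d \<Rightarrow> int) \<Rightarrow> real) measure) \<and>
         measure Wmeasure F > 1 - 4 * \<gamma> \<and>
         (\<forall>v'\<in>F. \<forall>r::nat. r \<ge> 1 \<longrightarrow>
            (\<forall>js :: 'd zindex list. length js = r \<longrightarrow> \<not> resonant js \<longrightarrow>
              (\<forall>b::int. \<bar>Omega R m v' js - real_of_int b\<bar> \<ge>
                 C ^ r * \<gamma> / Nfun js powr (m + real CARD('d) + 3))))))"
proof -
  have m: "0 \<le> m"
    using assms(2) by (smt (verit) divide_nonneg_nonneg of_nat_0_le_iff)
  obtain S where S: "(\<integral>\<^sup>+j. ennreal (zweight (j :: 'd zindex)) \<partial>count_space UNIV) = ennreal S" "0 \<le> S"
    using nn_integral_zweight_finite[where 'd = 'd] by (cases rule: ennreal_cases) auto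
  obtain C where C: "0 < C" "C < 1" "C * S < 1" "2 * (1 + 3 / R) * (C * S / (1 - C * S)) < 1"
    using exists_small_ratio[OF S(2), of "2 * (1 + 3 / R)"] assms(1) by (auto simp: add_pos_pos)
  show ?thesis
  proof (intro exI[of _ C] conjI allI impI)
    fix \<gamma> :: real
    assume "0 < \<gamma>"
    show "\<exists>F \<subseteq> (Wset :: (('d \<Rightarrow> int) \<Rightarrow> real) set). F \<in> sets Wmeasure \<and> measure Wmeasure F > 1 - 4 * \<gamma> \<and>
         (\<forall>v'\<in>F. \<forall>r::nat. r \<ge> 1 \<longrightarrow> (\<forall>js :: 'd zindex list. length js = r \<longrightarrow> \<not> resonant js \<longrightarrow>
              (\<forall>b::int. \<bar>Omega R m v' js - real_of_int b\<bar> \<ge> C ^ r * \<gamma> / Nfun js powr (m + real CARD('d) + 3))))"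
    proof (cases "\<gamma> \<le> 1/4")
      case True
      obtain F where "F \<subseteq> (Wset :: (('d \<Rightarrow> int) \<Rightarrow> real) set)" "F \<in> sets Wmeasure"
        "1 - \<gamma> < measure Wmeasure F" "\<forall>v\<in>F. \<forall>js. \<not> resonant js \<longrightarrow> v \<notin> small_divisor_set R m C \<gamma> js"
        using good_set_exists[OF assms(1) m \<open>0 < \<gamma>\<close> True C(1) less_imp_le[OF C(2)] S C(3,4)] by blast
      then show ?thesis
        using \<open>0 < \<gamma>\<close>
        by (intro exI[of _ F]) (auto simp: small_divisor_set_def near_integers_def not_less)
    qed (intro exI[of _ "{}"], auto)
  qed (use C in auto)
qed

end
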